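(* Let $\mu$ be an Ising model on $\{-1,1\}^p$ with $\ell_1$-width at most $\gamma>0$, fix $u\in[p]$, and define $\mathcal R^*(\theta)=\mathbb E_\mu\exp\big(-\theta\sigma_u-\sigma_u\sum_{j\ne u}\theta^*_{u,j}\sigma_j\big)$ for $\theta\in\mathbb R$. Then for every $\theta\in[-\gamma,\gamma]$, \[ \mathcal R^*(\theta)-\mathcal R^*(\theta^*_u)-(\mathcal R^* )'(\theta^*_u)(\theta-\theta^*_u)\ \ge\ \frac{e^{-\gamma}}{2+2\gamma}(\theta-\theta^*_u)^2 . \]
   Context: Ising model: $\mu(\underline\sigma)\propto\exp\big(\sum_{\{u,v\}}\theta^*_{u,v}\sigma_u\sigma_v+\sum_u\theta^*_u\sigma_u\big)$ on $\{-1,1\}^p$, first sum over unordered pairs of distinct indices, symmetric couplings; $\ell_1$-width at most $\gamma$ means $\sum_{v\ne u}|\theta^*_{u,v}|+|\theta^*_u|\le\gamma$ for all $u$. *)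

theory Defs
  imports "HOL-Analysis.Analysis" "HOL-Library.FuncSet"
begin

text \<open>Spin configurations on [p] = {0..<p}: functions {..<p} -> {-1,1}
  (extensional, undefined outside [p]).\<close>
definition ising_configs :: "nat \<Rightarrow> (nat \<Rightarrow> real) set" where
  "ising_configs p = PiE {..<p} (\<lambda>_. {-1, 1})"

definition ising_energy :: "nat \<Rightarrow> (nat \<Rightarrow> nat \<Rightarrow> real) \<Rightarrow> (nat \<Rightarrow> real) \<Rightarrow> (nat \<Rightarrow> real) \<Rightarrow> real" where
  "ising_energy p J h s =
     (\<Sum>(i,j)\<in>{(i,j). i < j \<and> j < p}. J i j * s i * s j) + (\<Sum>i<p. h i * s i)"

definition ising_Z :: "nat \<Rightarrow> (nat \<Rightarrow> nat \<Rightarrow> real) \<Rightarrow> (nat \<Rightarrow> real) \<Rightarrow> real" where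
  "ising_Z p J h = (\<Sum>s\<in>ising_configs p. exp (ising_energy p J h s))"

definition ising_prob :: "nat \<Rightarrow> (nat \<Rightarrow> nat \<Rightarrow> real) \<Rightarrow> (nat \<Rightarrow> real) \<Rightarrow> (nat \<Rightarrow> real) \<Rightarrow> real" where
  "ising_prob p J h s = exp (ising_energy p J h s) / ising_Z p J h"

definition ising_expect :: "nat \<Rightarrow> (nat \<Rightarrow> nat \<Rightarrow> real) \<Rightarrow> (nat \<Rightarrow> real) \<Rightarrow> ((nat \<Rightarrow> real) \<Rightarrow> real) \<Rightarrow> real" where
  "ising_expect p J h f = (\<Sum>s\<in>ising_configs p. ising_prob p J h s * f s)"

definition symmetric_couplings :: "nat \<Rightarrow> (nat \<Rightarrow> nat \<Rightarrow> real) \<Rightarrow> bool" where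
  "symmetric_couplings p J = (\<forall>i<p. \<forall>j<p. J i j = J j i)"

definition l1_width_le :: "nat \<Rightarrow> (nat \<Rightarrow> nat \<Rightarrow> real) \<Rightarrow> (nat \<Rightarrow> real) \<Rightarrow> real \<Rightarrow> bool" where
  "l1_width_le p J h \<gamma> = (\<forall>u<p. (\<Sum>v\<in>{..<p} - {u}. \<bar>J u v\<bar>) + \<bar>h u\<bar> \<le> \<gamma>)"

definition ising_Rstar :: "nat \<Rightarrow> (nat \<Rightarrow> nat \<Rightarrow> real) \<Rightarrow> (nat \<Rightarrow> real) \<Rightarrow> nat \<Rightarrow> real \<Rightarrow> real" where
  "ising_Rstar p J h u \<theta> =
     ising_expect p J h (\<lambda>s. exp (- \<theta> * s u - s u * (\<Sum>j\<in>{..<p} - {u}. J u j * s j)))"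

end

theory Submission imports Defs begin

text \<open>Write \<open>\<lambda>\<^sub>u(\<sigma>) = \<theta>\<^sup>*\<^sub>u + \<Sum>\<^sub>j\<^sub>\<noteq>\<^sub>u \<theta>\<^sup>*\<^sub>u\<^sub>j \<sigma>\<^sub>j\<close> for the local field at \<open>u\<close>.
  Flipping \<open>\<sigma>\<^sub>u\<close> multiplies the Gibbs weight by \<open>exp (-2 \<sigma>\<^sub>u \<lambda>\<^sub>u(\<sigma>))\<close>, so the measure
  tilted by \<open>exp (-\<sigma>\<^sub>u \<lambda>\<^sub>u(\<sigma>))\<close> is invariant under the flip. Since
  \<open>\<R>\<^sup>*(\<theta>)\<close> is the total mass of this tilted measure integrated against
  \<open>exp (-(\<theta> - \<theta>\<^sup>*\<^sub>u) \<sigma>\<^sub>u)\<close>, symmetrizing gives \<open>\<R>\<^sup>*(\<theta>) = \<R>\<^sup>*(\<theta>\<^sup>*\<^sub>u) cosh (\<theta> - \<theta>\<^sup>*\<^sub>u)\<close>.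
  Hence the derivative at \<open>\<theta>\<^sup>*\<^sub>u\<close> vanishes and the left-hand side equals
  \<open>\<R>\<^sup>*(\<theta>\<^sup>*\<^sub>u) (cosh x - 1) \<ge> \<R>\<^sup>*(\<theta>\<^sup>*\<^sub>u) x\<^sup>2/2\<close>, while \<open>\<R>\<^sup>*(\<theta>\<^sup>*\<^sub>u) \<ge> e\<^sup>-\<^sup>\<gamma>\<close> because
  the width bounds the exponent \<open>|\<lambda>\<^sub>u(\<sigma>)|\<close> by \<open>\<gamma>\<close>.\<close>

lemma cosh_ge_1_plus_square_half: "1 + x\<^sup>2 / 2 \<le> cosh (x::real)"
proof -
  have summable: "summable (\<lambda>n. if even n then x ^ n /\<^sub>R fact n else 0)"
    using cosh_converges sums_summable by blast
  have "(\<Sum>n<3. if even n then x ^ n /\<^sub>R fact n else 0)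
          \<le> (\<Sum>n. if even n then x ^ n /\<^sub>R fact n else 0)"
    by (rule sum_le_suminf[OF summable]) (auto simp: zero_le_even_power)
  also have "\<dots> = cosh x"
    using cosh_converges sums_unique by metis
  finally show ?thesis
    by (simp add: eval_nat_numeral)
qed

lemma sum_pairs_less:
  "(\<Sum>(i,j)\<in>{(i,j). i < j \<and> j < (p::nat)}. f i j) = (\<Sum>j<p. \<Sum>i<j. f i j)"
proof -
  have "{(i,j). i < j \<and> j < p} = (\<lambda>(j,i). (i,j)) ` (SIGMA j:{..<p}. {..<j})"
    by auto
  moreover have "inj_on (\<lambda>(j,i). (i,j)) (SIGMA j:{..<p}. {..<j})"
    by (auto simp: inj_on_def)
  ultimately show ?thesis
    by (simp add: sum.reindex case_prod_unfold sum.Sigma)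
qed

lemma sum_lessThan_remove_split:
  assumes "u < (p::nat)"
  shows "(\<Sum>j\<in>{..<p} - {u}. f j) = (\<Sum>j<p. if u < j then f j else 0) + (\<Sum>i<u. f i)"
proof -
  have "{..<p} - {u} = {u<..<p} \<union> {..<u}"
    using assms by auto
  then have "(\<Sum>j\<in>{..<p} - {u}. f j) = (\<Sum>j\<in>{u<..<p}. f j) + (\<Sum>i<u. f i)"
    by (metis sum.union_disjoint finite_greaterThanLessThan finite_lessThan
        greaterThanLessThan_iff lessThan_iff disjoint_iff order.asym)
  moreover have "(\<Sum>j<p. if u < j then f j else 0) = (\<Sum>j\<in>{u<..<p}. f j)"
    by (rule sum.mono_neutral_cong_right) auto
  ultimately show ?thesis
    by simp
qed

definition ising_local_field :: "nat \<Rightarrow> (nat \<Rightarrow> nat \<Rightarrow> real) \<Rightarrow> (nat \<Rightarrow> real) \<Rightarrow> nat \<Rightarrow> (nat \<Rightarrow> real) \<Rightarrow> real"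
  where "ising_local_field p J h u s = h u + (\<Sum>j\<in>{..<p} - {u}. J u j * s j)"

definition flip_spin :: "nat \<Rightarrow> (nat \<Rightarrow> real) \<Rightarrow> nat \<Rightarrow> real"
  where "flip_spin u s = s(u := - s u)"

lemma finite_ising_configs: "finite (ising_configs p)"
  unfolding ising_configs_def by (auto intro!: finite_PiE)

lemma ising_configs_nonempty: "ising_configs p \<noteq> {}"
  unfolding ising_configs_def by (simp add: PiE_eq_empty_iff)

lemma ising_configs_spin: "s \<in> ising_configs p \<Longrightarrow> j < p \<Longrightarrow> s j = -1 \<or> s j = 1"
  unfolding ising_configs_def by (auto simp: PiE_iff)

lemma flip_spin_flip_spin [simp]: "flip_spin u (flip_spin u s) = s"
  unfolding flip_spin_def by auto

lemma flip_spin_in_ising_configs: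
  "s \<in> ising_configs p \<Longrightarrow> u < p \<Longrightarrow> flip_spin u s \<in> ising_configs p"
  unfolding ising_configs_def flip_spin_def by (auto simp: PiE_iff extensional_def)

lemma bij_betw_flip_spin: "u < p \<Longrightarrow> bij_betw (flip_spin u) (ising_configs p) (ising_configs p)"
  by (rule bij_betwI[where g = "flip_spin u"]) (auto simp: flip_spin_in_ising_configs)

lemma ising_local_field_flip_spin [simp]:
  "ising_local_field p J h u (flip_spin u s) = ising_local_field p J h u s"
  unfolding ising_local_field_def flip_spin_def by (auto intro!: sum.cong)

lemma ising_Z_pos: "0 < ising_Z p J h"
  unfolding ising_Z_def
  using finite_ising_configs ising_configs_nonempty by (intro sum_pos) auto

lemma ising_prob_nonneg: "0 \<le> ising_prob p J h s"
  unfolding ising_prob_def using ising_Z_pos by (simp add: less_imp_le)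

lemma sum_ising_prob: "(\<Sum>s\<in>ising_configs p. ising_prob p J h s) = 1"
  unfolding ising_prob_def sum_divide_distrib[symmetric] ising_Z_def[symmetric]
  using ising_Z_pos by (simp add: less_imp_neq[symmetric])

lemma ising_expect_mult_right:
  "ising_expect p J h (\<lambda>s. f s * c) = ising_expect p J h f * c"
  unfolding ising_expect_def by (simp add: sum_distrib_right mult.assoc)

lemma ising_expect_ge_const:
  assumes "\<And>s. s \<in> ising_configs p \<Longrightarrow> c \<le> f s"
  shows "c \<le> ising_expect p J h f"
proof -
  have "c = (\<Sum>s\<in>ising_configs p. ising_prob p J h s * c)"
    by (simp add: sum_distrib_right[symmetric] sum_ising_prob)
  also have "\<dots> \<le> ising_expect p J h f"
    unfolding ising_expect_def
    using assms ising_prob_nonneg by (intro sum_mono mult_left_mono)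
  finally show ?thesis .
qed

lemma ising_energy_fun_upd:
  assumes sym: "symmetric_couplings p J" and "u < p"
  shows "ising_energy p J h (s(u := a))
           = ising_energy p J h s + (a - s u) * ising_local_field p J h u s"
proof -
  define t where "t = s(u := a)"
  define d where "d = a - s u"
  have term_diff: "J i j * t i * t j - J i j * s i * s j =
      (if i = u then J u j * d * s j else 0) + (if j = u then J i u * s i * d else 0)"
    if "i < j" for i j
    using that by (cases "i = u"; cases "j = u") (auto simp: t_def d_def algebra_simps)
  have "(\<Sum>(i,j)\<in>{(i,j). i < j \<and> j < p}. J i j * t i * t j)
        - (\<Sum>(i,j)\<in>{(i,j). i < j \<and> j < p}. J i j * s i * s j)
      = (\<Sum>j<p. \<Sum>i<j. J i j * t i * t j - J i j * s i * s j)"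
    by (simp add: sum_pairs_less sum_subtractf)
  also have "\<dots> = (\<Sum>j<p. \<Sum>i<j. (if i = u then J u j * d * s j else 0)
                                  + (if j = u then J i u * s i * d else 0))"
    using term_diff by simp
  also have "\<dots> = (\<Sum>j<p. (if u < j then J u j * d * s j else 0)
                          + (if j = u then (\<Sum>i<u. J i u * s i * d) else 0))"
    by (rule sum.cong) (auto simp: sum.distrib sum.delta)
  also have "\<dots> = (\<Sum>j<p. if u < j then J u j * d * s j else 0) + (\<Sum>i<u. J u i * d * s i)"
    using sym \<open>u < p\<close> unfolding symmetric_couplings_def
    by (auto simp: sum.distrib intro!: sum.cong)
  also have "\<dots> = d * (\<Sum>j\<in>{..<p} - {u}. J u j * s j)"
    using sum_lessThan_remove_split[OF \<open>u < p\<close>, of "\<lambda>j. J u j * d * s j"]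
    by (simp add: sum_distrib_left algebra_simps)
  finally have pairs: "(\<Sum>(i,j)\<in>{(i,j). i < j \<and> j < p}. J i j * t i * t j)
        - (\<Sum>(i,j)\<in>{(i,j). i < j \<and> j < p}. J i j * s i * s j)
      = d * (\<Sum>j\<in>{..<p} - {u}. J u j * s j)" .
  have "(\<Sum>i<p. h i * t i) - (\<Sum>i<p. h i * s i) = (\<Sum>i<p. if i = u then h u * d else 0)"
    unfolding sum_subtractf[symmetric] by (intro sum.cong) (auto simp: t_def d_def algebra_simps)
  then have fields: "(\<Sum>i<p. h i * t i) - (\<Sum>i<p. h i * s i) = h u * d"
    using \<open>u < p\<close> by simp
  show ?thesis
    using pairs fields unfolding t_def[symmetric] ising_energy_def ising_local_field_def
    by (simp add: d_def algebra_simps)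
qed

lemma ising_prob_flip_spin:
  assumes "symmetric_couplings p J" and "u < p"
  shows "ising_prob p J h (flip_spin u s)
           = ising_prob p J h s * exp (- 2 * s u * ising_local_field p J h u s)"
  using ising_energy_fun_upd[OF assms, of h s "- s u"]
  unfolding ising_prob_def flip_spin_def by (simp add: exp_add[symmetric] algebra_simps)

lemma ising_expect_tilted_flip_spin:
  assumes "symmetric_couplings p J" and "u < p"
  shows "ising_expect p J h (\<lambda>s. exp (- s u * ising_local_field p J h u s) * f (s u))
       = ising_expect p J h (\<lambda>s. exp (- s u * ising_local_field p J h u s) * f (- s u))"
proof -
  let ?g = "\<lambda>s. ising_prob p J h s * (exp (- s u * ising_local_field p J h u s) * f (s u))"
  have "ising_expect p J h (\<lambda>s. exp (- s u * ising_local_field p J h u s) * f (s u))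
      = (\<Sum>s\<in>ising_configs p. ?g (flip_spin u s))"
    unfolding ising_expect_def
    using sum.reindex_bij_betw[OF bij_betw_flip_spin[OF \<open>u < p\<close>], of ?g] by simp
  also have "\<dots> = ising_expect p J h (\<lambda>s. exp (- s u * ising_local_field p J h u s) * f (- s u))"
    unfolding ising_expect_def ising_prob_flip_spin[OF assms] ising_local_field_flip_spin
    by (intro sum.cong refl) (simp add: flip_spin_def mult_exp_exp)
  finally show ?thesis .
qed

lemma ising_Rstar_eq_tilted_expect:
  "ising_Rstar p J h u \<theta>
     = ising_expect p J h (\<lambda>s. exp (- s u * ising_local_field p J h u s) * exp (- (\<theta> - h u) * s u))"
  unfolding ising_Rstar_def ising_local_field_def mult_exp_exp
  by (simp add: algebra_simps)

lemma ising_Rstar_eq_cosh: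
  assumes "symmetric_couplings p J" and "u < p"
  shows "ising_Rstar p J h u \<theta> = ising_Rstar p J h u (h u) * cosh (\<theta> - h u)"
proof -
  define x where "x = \<theta> - h u"
  define w where "w = (\<lambda>s. exp (- s u * ising_local_field p J h u s))"
  have R: "ising_Rstar p J h u \<theta> = ising_expect p J h (\<lambda>s. w s * exp (- x * s u))"
    unfolding ising_Rstar_eq_tilted_expect w_def x_def ..
  have flip: "ising_expect p J h (\<lambda>s. w s * exp (- x * s u))
      = ising_expect p J h (\<lambda>s. w s * exp (x * s u))"
    using ising_expect_tilted_flip_spin[OF assms, of h "\<lambda>v. exp (- x * v)"]
    unfolding w_def by simp
  have "2 * ising_Rstar p J h u \<theta>
      = ising_expect p J h (\<lambda>s. w s * exp (- x * s u)) + ising_expect p J h (\<lambda>s. w s * exp (x * s u))"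
    unfolding R flip by simp
  also have "\<dots> = ising_expect p J h (\<lambda>s. w s * (2 * cosh x))"
    unfolding ising_expect_def sum.distrib[symmetric]
  proof (intro sum.cong refl)
    fix s assume "s \<in> ising_configs p"
    then have "s u = -1 \<or> s u = 1"
      using ising_configs_spin \<open>u < p\<close> by blast
    then show "ising_prob p J h s * (w s * exp (- x * s u)) + ising_prob p J h s * (w s * exp (x * s u))
        = ising_prob p J h s * (w s * (2 * cosh x))"
      by (auto simp: cosh_field_def algebra_simps)
  qed
  also have "\<dots> = 2 * (ising_Rstar p J h u (h u) * cosh x)"
    unfolding ising_expect_mult_right ising_Rstar_eq_tilted_expect w_def by simp
  finally show ?thesis
    by (simp add: x_def)
qed

lemma deriv_ising_Rstar_at_field:
  assumes "symmetric_couplings p J" and "u < p"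
  shows "deriv (ising_Rstar p J h u) (h u) = 0"
proof -
  have "ising_Rstar p J h u = (\<lambda>t. ising_Rstar p J h u (h u) * cosh (t - h u))"
    using ising_Rstar_eq_cosh[OF assms] by blast
  moreover have "((\<lambda>t. ising_Rstar p J h u (h u) * cosh (t - h u)) has_real_derivative
      ising_Rstar p J h u (h u) * (sinh (h u - h u) * 1)) (at (h u))"
    by (auto intro!: derivative_eq_intros)
  ultimately show ?thesis
    by (simp add: DERIV_imp_deriv)
qed

lemma ising_Rstar_at_field_ge:
  assumes "l1_width_le p J h \<gamma>" and "u < p"
  shows "exp (- \<gamma>) \<le> ising_Rstar p J h u (h u)"
  unfolding ising_Rstar_def
proof (rule ising_expect_ge_const)
  fix s assume s: "s \<in> ising_configs p"
  let ?m = "\<Sum>j\<in>{..<p} - {u}. J u j * s j"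
  have "\<bar>?m\<bar> \<le> (\<Sum>j\<in>{..<p} - {u}. \<bar>J u j * s j\<bar>)"
    by (rule sum_abs)
  also have "\<dots> = (\<Sum>j\<in>{..<p} - {u}. \<bar>J u j\<bar>)"
    using ising_configs_spin[OF s] by (intro sum.cong refl) (force simp: abs_mult)
  finally have "\<bar>h u\<bar> + \<bar>?m\<bar> \<le> \<gamma>"
    using assms unfolding l1_width_le_def by force
  then show "exp (- \<gamma>) \<le> exp (- h u * s u - s u * ?m)"
    using ising_configs_spin[OF s \<open>u < p\<close>] by auto
qed

theorem mainTheorem9:
  fixes p :: nat and J :: "nat \<Rightarrow> nat \<Rightarrow> real" and h :: "nat \<Rightarrow> real"
    and \<gamma> \<theta> :: real and u :: nat
  assumes "symmetric_couplings p J"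
    and "\<gamma> > 0"
    and "l1_width_le p J h \<gamma>"
    and "u < p"
    and "\<theta> \<in> {-\<gamma>..\<gamma>}"
  shows "ising_Rstar p J h u \<theta> - ising_Rstar p J h u (h u)
           - deriv (ising_Rstar p J h u) (h u) * (\<theta> - h u)
         \<ge> exp (- \<gamma>) / (2 + 2 * \<gamma>) * (\<theta> - h u)^2"
proof -
  define x where "x = \<theta> - h u"
  define R0 where "R0 = ising_Rstar p J h u (h u)"
  have R0_ge: "exp (- \<gamma>) \<le> R0"
    unfolding R0_def using ising_Rstar_at_field_ge[OF assms(3,4)] .
  have "exp (- \<gamma>) / (2 + 2 * \<gamma>) * x\<^sup>2 \<le> exp (- \<gamma>) / 2 * x\<^sup>2"
    using \<open>\<gamma> > 0\<close> by (intro mult_right_mono divide_left_mono) auto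
  also have "\<dots> \<le> R0 * (x\<^sup>2 / 2)"
    using R0_ge by (simp add: mult_right_mono)
  also have "\<dots> \<le> R0 * (cosh x - 1)"
    using R0_ge cosh_ge_1_plus_square_half[of x]
    by (intro mult_left_mono) (auto intro: order_trans[OF _ R0_ge])
  also have "\<dots> = ising_Rstar p J h u \<theta> - R0 - deriv (ising_Rstar p J h u) (h u) * x"
    using ising_Rstar_eq_cosh[OF assms(1,4), of h \<theta>] deriv_ising_Rstar_at_field[OF assms(1,4)]
    by (simp add: R0_def x_def algebra_simps)
  finally show ?thesis
    by (simp add: R0_def x_def)
qed

end
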